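(* Let $(\mathcal X,d)$ be a Polish space, $\mu$ a Borel probability measure on $\mathcal X$, and $(X_t)_{t\ge0}$ a $\mu$-symmetric, ergodic, conservative Markov process on $\mathcal X$ with Dirichlet form $(\mathcal E,\mathbb D(\mathcal E))$ on $L^2(\mu)$. Let $\Phi:\mathbb R^+\to[0,+\infty]$ be convex, increasing, left-continuous, with $\Phi(0)=0$ and $\lim_{r\to\infty}\Phi(r)/r=+\infty$, and let $\Psi(r)=\sup_{\lambda\ge0}(\lambda r-\Phi(\lambda))$. Assume that for constants $C_1,C_2\ge0$, $\|g^2\|_\Phi\le C_1\mathcal E(g,g)+C_2\mu(g^2)$ for all $g\in\mathbb D(\mathcal E)$ with $\mu(g^2)=1$, that a Poincaré inequality $\mathrm{Var}_\mu(g)\le C_P\mathcal E(g,g)$, $g\in\mathbb D(\mathcal E)$, holds, and that $d^p(\cdot,x_0)\in L^\Psi(\mu)$ for some $x_0\in\mathcal X$ and some $p\ge1$. Then there are positive constants $C_1',C_2',\kappa$ such that for all $\nu\in\mathcal M_1(\mathcal X)$, $$W_p^p(\nu,\mu)\le\sqrt{C_1'I(\nu|\mu)^2+C_2'I(\nu|\mu)},\qquad \kappa\left([1+W_1(\nu,\mu)^2]^{p/2}-1\right)\le I(\nu|\mu),$$ and, when $p\ge2$, $\kappa\left([1+W_2(\nu,\mu)^4]^{p/4}-1\right)\le I(\nu|\mu)$.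
   Context: Ergodicity means: $g\in\mathbb D(\mathcal E)$, $\mathcal E(g,g)=0$ imply $g$ constant. $N_\Phi(g)=\inf\{c>0:\int\Phi(|g|/c)d\mu\le1\}$, $L^\Psi(\mu)=\{g:N_\Psi(g)<\infty\}$, and $\|g\|_\Phi=\sup\{\int gu\,d\mu:\ N_\Psi(u)\le1\}$. $\mathcal M_1(\mathcal X)$ is the set of Borel probability measures; $W_q(\nu,\mu)=\left(\inf_\pi\iint d^q\,d\pi\right)^{1/q}$ over couplings $\pi$ of $\nu,\mu$. Fisher information: $I(\nu|\mu)=\mathcal E(\sqrt f,\sqrt f)$ if $\nu=f\mu$ with $\sqrt f\in\mathbb D(\mathcal E)$, $+\infty$ otherwise. *)

theory Defs
  imports "HOL-Probability.Probability"
begin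

definition sq_int :: "'a measure \<Rightarrow> ('a \<Rightarrow> real) \<Rightarrow> bool" where
  "sq_int \<mu> f \<longleftrightarrow> f \<in> borel_measurable \<mu> \<and> integrable \<mu> (\<lambda>x. (f x)\<^sup>2)"

definition dirichlet_form ::
  "'a measure \<Rightarrow> ('a \<Rightarrow> real) set \<Rightarrow> (('a \<Rightarrow> real) \<Rightarrow> ('a \<Rightarrow> real) \<Rightarrow> real) \<Rightarrow> bool" where
  "dirichlet_form \<mu> D E \<longleftrightarrow>
     D \<subseteq> {f. sq_int \<mu> f}
   \<and> (\<forall>f\<in>D. \<forall>g. g \<in> borel_measurable \<mu> \<and> (AE x in \<mu>. f x = g x) \<longrightarrow>
          g \<in> D \<and> (\<forall>h\<in>D. E g h = E f h \<and> E h g = E h f))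
   \<and> (\<forall>f\<in>D. \<forall>g\<in>D. \<forall>a::real. (\<lambda>x. f x + g x) \<in> D \<and> (\<lambda>x. a * f x) \<in> D)
   \<and> (\<forall>f\<in>D. \<forall>g\<in>D. \<forall>h\<in>D. \<forall>a::real.
          E (\<lambda>x. f x + g x) h = E f h + E g h \<and> E (\<lambda>x. a * f x) h = a * E f h)
   \<and> (\<forall>f\<in>D. \<forall>g\<in>D. E f g = E g f)
   \<and> (\<forall>f\<in>D. E f f \<ge> 0)
   \<and> (\<forall>f. sq_int \<mu> f \<longrightarrow> (\<forall>\<epsilon>>0. \<exists>g\<in>D. (\<integral>x. (f x - g x)\<^sup>2 \<partial>\<mu>) < \<epsilon>))
   \<and> (\<forall>F::nat \<Rightarrow> 'a \<Rightarrow> real. (\<forall>n. F n \<in> D) \<and>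
          (\<forall>\<epsilon>>0. \<exists>N. \<forall>n\<ge>N. \<forall>m\<ge>N.
              (\<integral>x. (F n x - F m x)\<^sup>2 \<partial>\<mu>)
              + E (\<lambda>x. F n x - F m x) (\<lambda>x. F n x - F m x) < \<epsilon>)
        \<longrightarrow> (\<exists>f\<in>D. (\<lambda>n. (\<integral>x. (F n x - f x)\<^sup>2 \<partial>\<mu>)
              + E (\<lambda>x. F n x - f x) (\<lambda>x. F n x - f x)) \<longlonglongrightarrow> 0))
   \<and> (\<forall>f\<in>D. (\<lambda>x. min 1 (max 0 (f x))) \<in> D \<and>
          E (\<lambda>x. min 1 (max 0 (f x))) (\<lambda>x. min 1 (max 0 (f x))) \<le> E f f)"

definition ergodic_form ::
  "'a measure \<Rightarrow> ('a \<Rightarrow> real) set \<Rightarrow> (('a \<Rightarrow> real) \<Rightarrow> ('a \<Rightarrow> real) \<Rightarrow> real) \<Rightarrow> bool" where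
  "ergodic_form \<mu> D E \<longleftrightarrow> (\<forall>g\<in>D. E g g = 0 \<longrightarrow> (\<exists>c. AE x in \<mu>. g x = c))"

text \<open>Conservativeness (P_t 1 = 1) for a Dirichlet form w.r.t. a finite measure.\<close>
definition conservative_form ::
  "'a measure \<Rightarrow> ('a \<Rightarrow> real) set \<Rightarrow> (('a \<Rightarrow> real) \<Rightarrow> ('a \<Rightarrow> real) \<Rightarrow> real) \<Rightarrow> bool" where
  "conservative_form \<mu> D E \<longleftrightarrow> (\<lambda>x. 1) \<in> D \<and> E (\<lambda>x. 1) (\<lambda>x. 1) = 0"

definition young_fun :: "(real \<Rightarrow> ennreal) \<Rightarrow> bool" where
  "young_fun \<Phi> \<longleftrightarrow>
     \<Phi> 0 = 0
   \<and> mono_on {0..} \<Phi>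
   \<and> (\<forall>x\<ge>0. \<forall>y\<ge>0. \<forall>t\<in>{0..1}.
         \<Phi> ((1 - t) * x + t * y) \<le> ennreal (1 - t) * \<Phi> x + ennreal t * \<Phi> y)
   \<and> (\<forall>r>0. (\<Phi> \<longlongrightarrow> \<Phi> r) (at_left r))
   \<and> ((\<lambda>r. \<Phi> r / ennreal r) \<longlongrightarrow> \<infinity>) at_top"

definition young_conj :: "(real \<Rightarrow> ennreal) \<Rightarrow> real \<Rightarrow> ennreal" where
  "young_conj \<Phi> r = e2ennreal (SUP l\<in>{0..}. ereal (l * r) - enn2ereal (\<Phi> l))"

text \<open>Luxemburg gauge N_Phi (value +infinity if no c works).\<close>
definition orlicz_gauge :: "'a measure \<Rightarrow> (real \<Rightarrow> ennreal) \<Rightarrow> ('a \<Rightarrow> real) \<Rightarrow> ereal" where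
  "orlicz_gauge \<mu> \<Phi> g =
     Inf {ereal c | c. c > 0 \<and> (\<integral>\<^sup>+ x. \<Phi> (\<bar>g x\<bar> / c) \<partial>\<mu>) \<le> 1}"

definition orlicz_space :: "'a measure \<Rightarrow> (real \<Rightarrow> ennreal) \<Rightarrow> ('a \<Rightarrow> real) set" where
  "orlicz_space \<mu> \<Phi> = {g. g \<in> borel_measurable \<mu> \<and> orlicz_gauge \<mu> \<Phi> g < \<infinity>}"

definition orlicz_norm :: "'a measure \<Rightarrow> (real \<Rightarrow> ennreal) \<Rightarrow> ('a \<Rightarrow> real) \<Rightarrow> ereal" where
  "orlicz_norm \<mu> \<Phi> g =
     (SUP u \<in> {u. u \<in> borel_measurable \<mu> \<and> orlicz_gauge \<mu> (young_conj \<Phi>) u \<le> 1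
                  \<and> integrable \<mu> (\<lambda>x. g x * u x)}. ereal (\<integral>x. g x * u x \<partial>\<mu>))"

definition prob_measures :: "'a::topological_space measure set" where
  "prob_measures = {\<nu>. prob_space \<nu> \<and> sets \<nu> = sets borel}"

definition couplings :: "'a::topological_space measure \<Rightarrow> 'a measure \<Rightarrow> ('a \<times> 'a) measure set" where
  "couplings \<nu> \<mu> = {\<pi>. sets \<pi> = sets (borel :: ('a \<times> 'a) measure)
                      \<and> distr \<pi> borel fst = \<nu> \<and> distr \<pi> borel snd = \<mu>}"

definition wasserstein_pow :: "real \<Rightarrow> 'a::metric_space measure \<Rightarrow> 'a measure \<Rightarrow> ennreal" where
  "wasserstein_pow q \<nu> \<mu> =
     (INF \<pi> \<in> couplings \<nu> \<mu>. \<integral>\<^sup>+ z. ennreal (dist (fst z) (snd z) powr q) \<partial>\<pi>)"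

definition fisher_info ::
  "('a \<Rightarrow> real) set \<Rightarrow> (('a \<Rightarrow> real) \<Rightarrow> ('a \<Rightarrow> real) \<Rightarrow> real) \<Rightarrow> 'a measure \<Rightarrow> 'a measure \<Rightarrow> ennreal" where
  "fisher_info D E \<mu> \<nu> =
     (if \<exists>f. f \<in> borel_measurable \<mu> \<and> (\<forall>x. f x \<ge> 0) \<and> \<nu> = density \<mu> (\<lambda>x. ennreal (f x))
             \<and> (\<lambda>x. sqrt (f x)) \<in> D
      then (let f = (SOME f. f \<in> borel_measurable \<mu> \<and> (\<forall>x. f x \<ge> 0)
                         \<and> \<nu> = density \<mu> (\<lambda>x. ennreal (f x)) \<and> (\<lambda>x. sqrt (f x)) \<in> D)
            in ennreal (E (\<lambda>x. sqrt (f x)) (\<lambda>x. sqrt (f x))))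
      else \<infinity>)"

end

theory Submission
  imports Defs
begin

text \<open>Write \<open>\<nu> = f \<mu>\<close> with \<open>g = sqrt f \<in> D\<close> and \<open>I = E(g, g)\<close>. Couple \<open>\<nu>\<close> and \<open>\<mu>\<close> by leaving the
  common mass \<open>min f 1\<close> in place and sending the excess \<open>(f - 1)\<^sup>+\<close> to the deficit
  \<open>(1 - f)\<^sup>+\<close> independently. Any cost vanishing on the diagonal and bounded by \<open>W x + W y\<close>
  then costs at most \<open>\<integral> W |f - 1| d\<mu>\<close>; for \<open>d(x, y) powr q\<close> take \<open>W \<approx> 1 + d(\<cdot>, x0) powr p\<close>.
  Since \<open>|f - 1| = |g - 1| (g + 1)\<close>, Cauchy--Schwarz reduces this to weighted \<open>L\<^sup>2\<close> norms of
  \<open>g \<plusminus> 1\<close>; by duality the Orlicz inequality controls the weight \<open>d(\<cdot>, x0) powr p \<in> L\<^sup>\<Psi>\<close>, and the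
  Poincare inequality controls \<open>\<integral>(g - 1)\<^sup>2 \<le> 2 Var(g)\<close>. This gives
  \<open>W_q\<^sup>q \<le> K sqrt (I (1 + I))\<close> for \<open>q \<le> p\<close>; the lower bounds on \<open>I\<close> follow from this for small \<open>I\<close>
  and, for large \<open>I\<close>, from Jensen's inequality \<open>W_q\<^sup>q \<le> (1 + W_p\<^sup>p) powr (q/p)\<close>.\<close>

text \<open>The sum of two subprobability measures, realised as a mixture over a two-point space.\<close>
definition mix_measure :: "'a measure \<Rightarrow> 'a measure \<Rightarrow> 'a measure" where
  "mix_measure M1 M2 = count_space UNIV \<bind> (\<lambda>b::bool. if b then M1 else M2)"

context
  fixes M1 M2 N :: "'a measure"
  assumes sets_M1: "sets M1 = sets N" and sets_M2: "sets M2 = sets N"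
    and M1_le_1: "emeasure M1 (space M1) \<le> 1" and M2_le_1: "emeasure M2 (space M2) \<le> 1"
    and space_N: "space N \<noteq> {}"
begin

lemma sets_mix_measure: "sets (mix_measure M1 M2) = sets N"
  unfolding mix_measure_def by (rule sets_bind) (use sets_M1 sets_M2 in auto)

lemma nn_integral_mix_measure:
  assumes g: "g \<in> borel_measurable N"
  shows "(\<integral>\<^sup>+z. g z \<partial>mix_measure M1 M2) = (\<integral>\<^sup>+z. g z \<partial>M1) + (\<integral>\<^sup>+z. g z \<partial>M2)"
proof -
  have "subprob_space M1" "subprob_space M2"
    using M1_le_1 M2_le_1 space_N sets_eq_imp_space_eq[OF sets_M1] sets_eq_imp_space_eq[OF sets_M2]
    by (auto intro!: subprob_spaceI)
  then have K: "(\<lambda>b::bool. if b then M1 else M2) \<in> measurable (count_space UNIV) (subprob_algebra N)"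
    unfolding measurable_count_space_eq1 space_subprob_algebra using sets_M1 sets_M2 by auto
  have "(\<integral>\<^sup>+z. g z \<partial>mix_measure M1 M2)
      = (\<integral>\<^sup>+b. (\<integral>\<^sup>+z. g z \<partial>(if b then M1 else M2)) \<partial>count_space UNIV)"
    unfolding mix_measure_def by (rule nn_integral_bind[OF g K])
  also have "\<dots> = (\<Sum>b\<in>UNIV. (\<integral>\<^sup>+z. g z \<partial>(if b then M1 else M2)))"
    by (rule nn_integral_count_space_finite) simp
  finally show ?thesis by (simp add: UNIV_bool add.commute)
qed

end

lemma sets_pair_measure_borel:
  fixes M :: "'a::second_countable_topology measure"
  assumes "sets M = sets borel"
  shows "sets (M \<Otimes>\<^sub>M M) = sets (borel :: ('a \<times> 'a) measure)"
  by (metis assms borel_prod sets_pair_measure_cong)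

lemma borel_measurable_fst[measurable]:
  "fst \<in> measurable (borel :: ('a::second_countable_topology \<times> 'b::second_countable_topology) measure) borel"
  by (metis borel_prod measurable_fst)

lemma borel_measurable_snd[measurable]:
  "snd \<in> measurable (borel :: ('a::second_countable_topology \<times> 'b::second_countable_topology) measure) borel"
  by (metis borel_prod measurable_snd)

lemma distr_eqI_nn_integral_indicator:
  assumes h: "h \<in> measurable M N" and sets_\<nu>: "sets \<nu> = sets N"
    and eq: "\<And>A. A \<in> sets N \<Longrightarrow> (\<integral>\<^sup>+z. indicator A (h z) \<partial>M) = emeasure \<nu> A"
  shows "distr M N h = \<nu>"
proof (rule measure_eqI)
  show "sets (distr M N h) = sets \<nu>" using sets_\<nu> by simp
  fix A assume "A \<in> sets (distr M N h)"
  then have A: "A \<in> sets N" by simp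
  have "emeasure (distr M N h) A = (\<integral>\<^sup>+z. indicator A z \<partial>distr M N h)"
    using A by simp
  also have "\<dots> = (\<integral>\<^sup>+z. indicator A (h z) \<partial>M)"
    by (rule nn_integral_distr[OF h]) (use A in simp)
  finally show "emeasure (distr M N h) A = emeasure \<nu> A" using eq[OF A] by simp
qed

lemma ennreal_plus_eq: "0 \<le> a \<Longrightarrow> 0 \<le> b \<Longrightarrow> a + b = c \<Longrightarrow> ennreal a + ennreal b = ennreal c"
  by (metis ennreal_plus)

locale density_coupling = prob_space \<mu> for \<mu> :: "'a::second_countable_topology measure" +
  fixes f :: "'a \<Rightarrow> real"
  assumes sets_\<mu>: "sets \<mu> = sets borel"
    and f_measurable: "f \<in> borel_measurable \<mu>"
    and f_nonneg: "\<And>x. 0 \<le> f x"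
    and nn_integral_f: "(\<integral>\<^sup>+x. ennreal (f x) \<partial>\<mu>) = 1"
begin

lemma measurable_\<mu>: "measurable \<mu> N = measurable borel N"
  by (rule measurable_cong_sets[OF sets_\<mu> refl])

lemma measurable_\<mu>\<mu>: "measurable (\<mu> \<Otimes>\<^sub>M \<mu>) N = measurable borel N"
  by (rule measurable_cong_sets[OF sets_pair_measure_borel[OF sets_\<mu>] refl])

lemma f_borel[measurable]: "f \<in> borel_measurable borel"
  using f_measurable by (simp add: measurable_\<mu>)

definition common :: "'a \<Rightarrow> real" where "common x = min (f x) 1"
definition excess :: "'a \<Rightarrow> real" where "excess x = max (f x - 1) 0"
definition deficit :: "'a \<Rightarrow> real" where "deficit x = max (1 - f x) 0"
definition transported :: ennreal where "transported = (\<integral>\<^sup>+x. ennreal (excess x) \<partial>\<mu>)"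

definition diagonal_part :: "('a \<times> 'a) measure" where
  "diagonal_part = distr (density \<mu> (\<lambda>x. ennreal (common x))) borel (\<lambda>x. (x, x))"
definition transport_part :: "('a \<times> 'a) measure" where
  "transport_part = density (\<mu> \<Otimes>\<^sub>M \<mu>)
     (\<lambda>z. ennreal (excess (fst z)) * ennreal (deficit (snd z)) / transported)"
definition coupling :: "('a \<times> 'a) measure" where
  "coupling = mix_measure diagonal_part transport_part"

lemma common_excess_deficit_borel[measurable]:
  "common \<in> borel_measurable borel" "excess \<in> borel_measurable borel"
  "deficit \<in> borel_measurable borel"
  unfolding common_def[abs_def] excess_def[abs_def] deficit_def[abs_def] by measurable

lemma common_plus_excess: "ennreal (common x) + ennreal (excess x) = ennreal (f x)"
  unfolding common_def excess_def using f_nonneg[of x]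
  by (intro ennreal_plus_eq) (auto simp: min_def max_def)

lemma common_plus_deficit: "ennreal (common x) + ennreal (deficit x) = 1"
  unfolding common_def deficit_def using f_nonneg[of x]
  by (simp only: ennreal_1[symmetric], intro ennreal_plus_eq) (auto simp: min_def max_def)

lemma excess_plus_deficit: "ennreal (excess x) + ennreal (deficit x) = ennreal \<bar>f x - 1\<bar>"
  unfolding excess_def deficit_def
  by (intro ennreal_plus_eq) (auto simp: max_def)

lemma nn_integral_common_plus_transported: "(\<integral>\<^sup>+x. ennreal (common x) \<partial>\<mu>) + transported = 1"
  unfolding transported_def nn_integral_f[symmetric]
  by (subst nn_integral_add[symmetric]) (auto simp: measurable_\<mu> common_plus_excess)

lemma nn_integral_deficit: "(\<integral>\<^sup>+x. ennreal (deficit x) \<partial>\<mu>) = transported"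
proof -
  let ?c = "\<integral>\<^sup>+x. ennreal (common x) \<partial>\<mu>"
  have "?c + (\<integral>\<^sup>+x. ennreal (deficit x) \<partial>\<mu>) = 1"
    by (subst nn_integral_add[symmetric]) (auto simp: measurable_\<mu> common_plus_deficit emeasure_space_1)
  then have "?c + (\<integral>\<^sup>+x. ennreal (deficit x) \<partial>\<mu>) = ?c + transported"
    using nn_integral_common_plus_transported by simp
  moreover have "?c \<noteq> \<top>"
    using nn_integral_common_plus_transported by (metis ennreal_add_eq_top ennreal_one_neq_top)
  ultimately show ?thesis by (simp add: ennreal_add_left_cancel)
qed

lemma transported_le_1: "transported \<le> 1"
  using nn_integral_common_plus_transported by (metis add_increasing order_refl zero_le)

lemma transported_finite: "transported \<noteq> \<top>"
  using transported_le_1 by (metis ennreal_one_neq_top top_unique)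

lemma transported_zero_AE:
  assumes "transported = 0"
  shows "AE x in \<mu>. excess x = 0" "AE x in \<mu>. deficit x = 0"
proof -
  have "AE x in \<mu>. ennreal (excess x) = 0" "AE x in \<mu>. ennreal (deficit x) = 0"
    using assms nn_integral_deficit unfolding transported_def
    by (simp_all add: nn_integral_0_iff_AE[symmetric] measurable_\<mu>)
  then show "AE x in \<mu>. excess x = 0" "AE x in \<mu>. deficit x = 0"
    by (auto elim!: eventually_mono simp: excess_def deficit_def max_def split: if_splits)
qed

lemma nn_integral_diagonal_part:
  assumes [measurable]: "g \<in> borel_measurable borel"
  shows "(\<integral>\<^sup>+z. g z \<partial>diagonal_part) = (\<integral>\<^sup>+x. ennreal (common x) * g (x, x) \<partial>\<mu>)"
proof -
  have "(\<lambda>x. (x, x)) \<in> measurable (density \<mu> (\<lambda>x. ennreal (common x))) borel"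
    by (simp add: measurable_\<mu>)
  then show ?thesis
    unfolding diagonal_part_def by (simp add: nn_integral_distr nn_integral_density measurable_\<mu>)
qed

lemma nn_integral_transport_part:
  assumes [measurable]: "g \<in> borel_measurable borel"
  shows "(\<integral>\<^sup>+z. g z \<partial>transport_part)
    = (\<integral>\<^sup>+x. ennreal (excess x) * (\<integral>\<^sup>+y. ennreal (deficit y) * g (x, y) \<partial>\<mu>) / transported \<partial>\<mu>)"
proof -
  have "(\<integral>\<^sup>+z. g z \<partial>transport_part) = (\<integral>\<^sup>+x. \<integral>\<^sup>+y. ennreal (excess x) * ennreal (deficit y)
      / transported * g (x, y) \<partial>\<mu> \<partial>\<mu>)"
  proof -
    have "(\<lambda>z. ennreal (excess (fst z)) * ennreal (deficit (snd z)) / transported * g z)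
        \<in> borel_measurable (\<mu> \<Otimes>\<^sub>M \<mu>)"
      by (simp add: measurable_\<mu>\<mu>)
    from nn_integral_fst[OF this] show ?thesis
      unfolding transport_part_def by (simp add: nn_integral_density measurable_\<mu>\<mu>)
  qed
  also have "\<dots> = (\<integral>\<^sup>+x. ennreal (excess x) * (\<integral>\<^sup>+y. ennreal (deficit y) * g (x, y) \<partial>\<mu>)
      / transported \<partial>\<mu>)"
    by (intro nn_integral_cong)
      (simp add: nn_integral_cmult[symmetric] measurable_\<mu> divide_ennreal_def mult_ac)
  finally show ?thesis .
qed

lemma nn_integral_transport_part_fst:
  assumes [measurable]: "G \<in> borel_measurable borel"
  shows "(\<integral>\<^sup>+z. G (fst z) \<partial>transport_part) = (\<integral>\<^sup>+x. ennreal (excess x) * G x \<partial>\<mu>)"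
proof (cases "transported = 0")
  case True
  then have "AE x in \<mu>. excess x = 0" by (rule transported_zero_AE)
  then have "(\<integral>\<^sup>+x. ennreal (excess x) * H x \<partial>\<mu>) = 0" for H
    by (subst nn_integral_cong_AE[where v="\<lambda>_. 0"]) (auto elim!: eventually_mono)
  then show ?thesis
    by (simp add: nn_integral_transport_part ennreal_times_divide[symmetric])
next
  case False
  have "(\<integral>\<^sup>+y. ennreal (deficit y) * G x \<partial>\<mu>) / transported = G x" for x
  proof -
    have "(\<integral>\<^sup>+y. ennreal (deficit y) * G x \<partial>\<mu>) = transported * G x"
      by (simp add: nn_integral_multc measurable_\<mu> nn_integral_deficit)
    then show ?thesis
      using False transported_finite by (simp add: mult.commute ennreal_mult_divide_eq)
  qed
  then show ?thesis
    by (simp add: nn_integral_transport_part ennreal_times_divide[symmetric])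
qed

lemma nn_integral_transport_part_snd:
  assumes [measurable]: "G \<in> borel_measurable borel"
  shows "(\<integral>\<^sup>+z. G (snd z) \<partial>transport_part) = (\<integral>\<^sup>+x. ennreal (deficit x) * G x \<partial>\<mu>)"
proof -
  let ?c = "\<integral>\<^sup>+y. ennreal (deficit y) * G y \<partial>\<mu>"
  have "(\<integral>\<^sup>+z. G (snd z) \<partial>transport_part) = (\<integral>\<^sup>+x. ennreal (excess x) * (?c / transported) \<partial>\<mu>)"
    by (simp add: nn_integral_transport_part ennreal_times_divide)
  also have "\<dots> = transported * (?c / transported)"
    unfolding transported_def by (rule nn_integral_multc) (simp add: measurable_\<mu>)
  also have "\<dots> = ?c"
  proof (cases "transported = 0")
    case True
    then have "AE x in \<mu>. deficit x = 0" by (rule transported_zero_AE)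
    then have "?c = 0"
      by (subst nn_integral_cong_AE[where v="\<lambda>_. 0"]) (auto elim!: eventually_mono)
    then show ?thesis using True by simp
  next
    case False
    have "transported * (?c / transported) = ?c * transported / transported"
      by (simp only: ennreal_times_divide mult.commute)
    then show ?thesis
      using ennreal_mult_divide_eq[OF False transported_finite] by simp
  qed
  finally show ?thesis .
qed

lemma emeasure_diagonal_part_le_1: "emeasure diagonal_part (space diagonal_part) \<le> 1"
proof -
  have "emeasure diagonal_part (space diagonal_part) = (\<integral>\<^sup>+x. ennreal (common x) \<partial>\<mu>)"
    using nn_integral_diagonal_part[of "\<lambda>_. 1"] by simp
  then show ?thesis
    using nn_integral_common_plus_transported by (metis add_increasing2 order_refl zero_le)
qed

lemma emeasure_transport_part_le_1: "emeasure transport_part (space transport_part) \<le> 1"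
proof -
  have "emeasure transport_part (space transport_part) = (\<integral>\<^sup>+x. ennreal (excess x) \<partial>\<mu>)"
    using nn_integral_transport_part_fst[of "\<lambda>_. 1"] by simp
  then show ?thesis using transported_le_1 unfolding transported_def by simp
qed

lemma sets_coupling: "sets coupling = sets (borel :: ('a \<times> 'a) measure)"
  unfolding coupling_def
  by (rule sets_mix_measure[OF _ _ emeasure_diagonal_part_le_1 emeasure_transport_part_le_1])
    (simp_all add: diagonal_part_def transport_part_def sets_pair_measure_borel[OF sets_\<mu>])

lemma nn_integral_coupling:
  assumes "g \<in> borel_measurable borel"
  shows "(\<integral>\<^sup>+z. g z \<partial>coupling) = (\<integral>\<^sup>+z. g z \<partial>diagonal_part) + (\<integral>\<^sup>+z. g z \<partial>transport_part)"
  unfolding coupling_def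
  by (rule nn_integral_mix_measure[OF _ _ emeasure_diagonal_part_le_1 emeasure_transport_part_le_1 _ assms])
    (simp_all add: diagonal_part_def transport_part_def sets_pair_measure_borel[OF sets_\<mu>])

lemma nn_integral_coupling_fst:
  assumes [measurable]: "G \<in> borel_measurable borel"
  shows "(\<integral>\<^sup>+z. G (fst z) \<partial>coupling) = (\<integral>\<^sup>+x. ennreal (f x) * G x \<partial>\<mu>)"
proof -
  have "(\<integral>\<^sup>+z. G (fst z) \<partial>coupling)
      = (\<integral>\<^sup>+x. ennreal (common x) * G x \<partial>\<mu>) + (\<integral>\<^sup>+x. ennreal (excess x) * G x \<partial>\<mu>)"
    by (simp add: nn_integral_coupling nn_integral_diagonal_part nn_integral_transport_part_fst)
  also have "\<dots> = (\<integral>\<^sup>+x. ennreal (f x) * G x \<partial>\<mu>)"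
    by (subst nn_integral_add[symmetric])
      (simp_all add: measurable_\<mu> distrib_right[symmetric] common_plus_excess)
  finally show ?thesis .
qed

lemma nn_integral_coupling_snd:
  assumes [measurable]: "G \<in> borel_measurable borel"
  shows "(\<integral>\<^sup>+z. G (snd z) \<partial>coupling) = (\<integral>\<^sup>+x. G x \<partial>\<mu>)"
proof -
  have "(\<integral>\<^sup>+z. G (snd z) \<partial>coupling)
      = (\<integral>\<^sup>+x. ennreal (common x) * G x \<partial>\<mu>) + (\<integral>\<^sup>+x. ennreal (deficit x) * G x \<partial>\<mu>)"
    by (simp add: nn_integral_coupling nn_integral_diagonal_part nn_integral_transport_part_snd)
  also have "\<dots> = (\<integral>\<^sup>+x. G x \<partial>\<mu>)"
    by (subst nn_integral_add[symmetric])
      (simp_all add: measurable_\<mu> distrib_right[symmetric] common_plus_deficit)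
  finally show ?thesis .
qed

lemma coupling_in_couplings: "coupling \<in> couplings (density \<mu> (\<lambda>x. ennreal (f x))) \<mu>"
proof -
  have fst: "fst \<in> measurable coupling borel" and snd: "snd \<in> measurable coupling borel"
    by (simp_all add: measurable_cong_sets[OF sets_coupling refl])
  have "distr coupling borel fst = density \<mu> (\<lambda>x. ennreal (f x))"
    by (rule distr_eqI_nn_integral_indicator[OF fst])
      (simp_all add: sets_\<mu> nn_integral_coupling_fst emeasure_density measurable_\<mu> mult.commute)
  moreover have "distr coupling borel snd = \<mu>"
    by (rule distr_eqI_nn_integral_indicator[OF snd]) (simp_all add: sets_\<mu> nn_integral_coupling_snd)
  ultimately show ?thesis unfolding couplings_def using sets_coupling by simp
qed

lemma prob_space_coupling: "prob_space coupling"
proof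
  show "emeasure coupling (space coupling) = 1"
    using nn_integral_coupling_fst[of "\<lambda>_. 1"] nn_integral_f by simp
qed

lemma nn_integral_coupling_le:
  assumes [measurable]: "c \<in> borel_measurable borel" "W \<in> borel_measurable borel"
    and diag: "\<And>x. c (x, x) = 0" and c_le: "\<And>x y. c (x, y) \<le> W x + W y"
  shows "(\<integral>\<^sup>+z. c z \<partial>coupling) \<le> (\<integral>\<^sup>+x. W x * ennreal \<bar>f x - 1\<bar> \<partial>\<mu>)"
proof -
  have "(\<integral>\<^sup>+z. c z \<partial>coupling) = (\<integral>\<^sup>+z. c z \<partial>transport_part)"
    by (simp add: nn_integral_coupling nn_integral_diagonal_part diag)
  also have "\<dots> \<le> (\<integral>\<^sup>+z. W (fst z) + W (snd z) \<partial>transport_part)"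
    by (intro nn_integral_mono) (auto simp: c_le split_paired_all)
  also have "\<dots> = (\<integral>\<^sup>+x. ennreal (excess x) * W x \<partial>\<mu>) + (\<integral>\<^sup>+x. ennreal (deficit x) * W x \<partial>\<mu>)"
    by (simp add: nn_integral_add transport_part_def measurable_\<mu>\<mu>
        nn_integral_transport_part_fst[symmetric] nn_integral_transport_part_snd[symmetric])
  also have "\<dots> = (\<integral>\<^sup>+x. W x * ennreal \<bar>f x - 1\<bar> \<partial>\<mu>)"
    by (subst nn_integral_add[symmetric])
      (simp_all add: measurable_\<mu> excess_plus_deficit[symmetric] distrib_left mult.commute)
  finally show ?thesis .
qed

end

context
  fixes \<mu> :: "'a measure" and D E
  assumes DF: "dirichlet_form \<mu> D E"
begin

lemma dirichlet_form_sq_int: "f \<in> D \<Longrightarrow> sq_int \<mu> f"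
  using DF unfolding dirichlet_form_def by blast

lemma dirichlet_form_energy_nonneg: "f \<in> D \<Longrightarrow> 0 \<le> E f f"
  using DF unfolding dirichlet_form_def by blast

lemma dirichlet_form_add_mem: "f \<in> D \<Longrightarrow> g \<in> D \<Longrightarrow> (\<lambda>x. f x + g x) \<in> D"
  using DF unfolding dirichlet_form_def by blast

lemma dirichlet_form_scale_mem: "f \<in> D \<Longrightarrow> (\<lambda>x. a * f x) \<in> D"
  using DF unfolding dirichlet_form_def by blast

lemma dirichlet_form_energy_add_left:
  "f \<in> D \<Longrightarrow> g \<in> D \<Longrightarrow> h \<in> D \<Longrightarrow> E (\<lambda>x. f x + g x) h = E f h + E g h"
  using DF unfolding dirichlet_form_def by blast

lemma dirichlet_form_energy_scale_left: "f \<in> D \<Longrightarrow> h \<in> D \<Longrightarrow> E (\<lambda>x. a * f x) h = a * E f h"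
  using DF unfolding dirichlet_form_def by blast

lemma dirichlet_form_energy_sym: "f \<in> D \<Longrightarrow> g \<in> D \<Longrightarrow> E f g = E g f"
  using DF unfolding dirichlet_form_def by blast

lemma dirichlet_form_energy_scale:
  assumes "f \<in> D"
  shows "E (\<lambda>x. a * f x) (\<lambda>x. a * f x) = a\<^sup>2 * E f f"
proof -
  have af: "(\<lambda>x. a * f x) \<in> D" by (rule dirichlet_form_scale_mem[OF assms])
  have "E (\<lambda>x. a * f x) (\<lambda>x. a * f x) = a * E (\<lambda>x. a * f x) f"
    using dirichlet_form_energy_scale_left[OF assms af] dirichlet_form_energy_sym[OF assms af] by simp
  also have "\<dots> = a\<^sup>2 * E f f"
    using dirichlet_form_energy_scale_left[OF assms assms] by (simp add: power2_eq_square)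
  finally show ?thesis .
qed

lemma dirichlet_form_energy_add:
  assumes f: "f \<in> D" and g: "g \<in> D"
  shows "E (\<lambda>x. f x + g x) (\<lambda>x. f x + g x) = E f f + 2 * E f g + E g g"
proof -
  have fg: "(\<lambda>x. f x + g x) \<in> D" by (rule dirichlet_form_add_mem[OF f g])
  have "E (\<lambda>x. f x + g x) (\<lambda>x. f x + g x) = E f (\<lambda>x. f x + g x) + E g (\<lambda>x. f x + g x)"
    by (rule dirichlet_form_energy_add_left[OF f g fg])
  also have "E f (\<lambda>x. f x + g x) = E f f + E g f"
    using dirichlet_form_energy_sym[OF f fg] dirichlet_form_energy_add_left[OF f g f] by simp
  also have "E g (\<lambda>x. f x + g x) = E f g + E g g"
    using dirichlet_form_energy_sym[OF g fg] dirichlet_form_energy_add_left[OF f g g] by simp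
  finally show ?thesis using dirichlet_form_energy_sym[OF f g] by simp
qed

text \<open>For a conservative form the constants have zero energy, so the affine map
  \<open>c \<mapsto> E(g + c, g + c) = E(g, g) + 2 c E(g, 1)\<close> is nonnegative, which forces \<open>E(g, 1) = 0\<close>.\<close>
lemma dirichlet_form_energy_add_const:
  assumes cons: "conservative_form \<mu> D E" and g: "g \<in> D"
  shows "(\<lambda>x. g x + c) \<in> D" "E (\<lambda>x. g x + c) (\<lambda>x. g x + c) = E g g"
proof -
  have one: "(\<lambda>_. 1) \<in> D" "E (\<lambda>_. 1) (\<lambda>_. 1) = 0"
    using cons unfolding conservative_form_def by auto
  have shift: "(\<lambda>x. g x + t) \<in> D \<and> E (\<lambda>x. g x + t) (\<lambda>x. g x + t) = E g g + 2 * t * E g (\<lambda>_. 1)"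
    for t
  proof -
    have t: "(\<lambda>_. t * 1) \<in> D" by (rule dirichlet_form_scale_mem[OF one(1)])
    have "E (\<lambda>_. t * 1) (\<lambda>_. t * 1) = 0"
      using dirichlet_form_energy_scale[OF one(1), of t] one(2) by simp
    moreover have "E g (\<lambda>_. t * 1) = t * E g (\<lambda>_. 1)"
      using dirichlet_form_energy_scale_left[OF one(1) g, of t]
        dirichlet_form_energy_sym[OF g t] dirichlet_form_energy_sym[OF g one(1)] by simp
    ultimately show ?thesis
      using dirichlet_form_add_mem[OF g t] dirichlet_form_energy_add[OF g t] by simp
  qed
  have "E g (\<lambda>_. 1) = 0"
  proof (rule ccontr)
    assume ne: "E g (\<lambda>_. 1) \<noteq> 0"
    define t where "t = - (E g g + 1) / (2 * E g (\<lambda>_. 1))"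
    have "E g g + 2 * t * E g (\<lambda>_. 1) = -1" unfolding t_def using ne by (simp add: field_simps)
    then show False using shift[of t] dirichlet_form_energy_nonneg by force
  qed
  then show "(\<lambda>x. g x + c) \<in> D" "E (\<lambda>x. g x + c) (\<lambda>x. g x + c) = E g g"
    using shift[of c] by simp_all
qed

end

lemma young_conj_mono:
  assumes "0 \<le> r" "r \<le> r'"
  shows "young_conj \<Phi> r \<le> young_conj \<Phi> r'"
  unfolding young_conj_def
proof (intro e2ennreal_mono SUP_mono bexI)
  fix l :: real assume "l \<in> {0..}"
  then show "ereal (l * r) - enn2ereal (\<Phi> l) \<le> ereal (l * r') - enn2ereal (\<Phi> l)"
    using assms by (intro ereal_minus_mono) (auto intro: mult_left_mono)
qed

lemma orlicz_gauge_le_1I: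
  assumes "(\<integral>\<^sup>+ x. \<Psi> \<bar>u x\<bar> \<partial>\<mu>) \<le> 1"
  shows "orlicz_gauge \<mu> \<Psi> u \<le> 1"
  unfolding orlicz_gauge_def by (rule Inf_lower2[where u="ereal 1"]) (use assms in auto)

lemma orlicz_gauge_finiteD:
  assumes "orlicz_gauge \<mu> \<Psi> u \<noteq> \<infinity>"
  obtains c where "c > 0" "(\<integral>\<^sup>+ x. \<Psi> (\<bar>u x\<bar> / c) \<partial>\<mu>) \<le> 1"
proof -
  have "{ereal c | c. c > 0 \<and> (\<integral>\<^sup>+ x. \<Psi> (\<bar>u x\<bar> / c) \<partial>\<mu>) \<le> 1} \<noteq> {}"
    using assms unfolding orlicz_gauge_def by (metis Inf_empty top_ereal_def)
  then show ?thesis using that by blast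
qed

lemma integral_le_orlicz_norm:
  assumes "u \<in> borel_measurable \<mu>" "orlicz_gauge \<mu> (young_conj \<Phi>) u \<le> 1"
    and "integrable \<mu> (\<lambda>x. g x * u x)"
  shows "ereal (\<integral>x. g x * u x \<partial>\<mu>) \<le> orlicz_norm \<mu> \<Phi> g"
  unfolding orlicz_norm_def by (rule SUP_upper) (use assms in auto)

context
  fixes \<mu> :: "'a measure" and D E \<Phi> and C1 C2 :: real
  assumes DF: "dirichlet_form \<mu> D E" and C12: "C1 \<ge> 0" "C2 \<ge> 0"
    and orlicz_ineq: "\<And>g. g \<in> D \<Longrightarrow> (\<integral>x. (g x)\<^sup>2 \<partial>\<mu>) = 1 \<Longrightarrow>
           orlicz_norm \<mu> \<Phi> (\<lambda>x. (g x)\<^sup>2) \<le> ereal (C1 * E g g + C2 * (\<integral>x. (g x)\<^sup>2 \<partial>\<mu>))"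
begin

text \<open>The Orlicz inequality, assumed only for normalised \<open>g\<close>, extends to all of \<open>D\<close> by
  homogeneity.\<close>
lemma integral_square_mult_le:
  assumes h: "h \<in> D" and u: "u \<in> borel_measurable \<mu>" "orlicz_gauge \<mu> (young_conj \<Phi>) u \<le> 1"
    and int: "integrable \<mu> (\<lambda>x. (h x)\<^sup>2 * u x)"
  shows "(\<integral>x. (h x)\<^sup>2 * u x \<partial>\<mu>) \<le> C1 * E h h + C2 * (\<integral>x. (h x)\<^sup>2 \<partial>\<mu>)"
proof -
  define s where "s = (\<integral>x. (h x)\<^sup>2 \<partial>\<mu>)"
  have h2: "integrable \<mu> (\<lambda>x. (h x)\<^sup>2)"
    using dirichlet_form_sq_int[OF DF h] unfolding sq_int_def by auto
  have rhs: "0 \<le> C1 * E h h + C2 * s"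
    using C12 dirichlet_form_energy_nonneg[OF DF h] unfolding s_def by simp
  show ?thesis
  proof (cases "s = 0")
    case True
    then have "AE x in \<mu>. (h x)\<^sup>2 = 0"
      using h2 unfolding s_def by (subst integral_nonneg_eq_0_iff_AE[symmetric]) auto
    then have "(\<integral>x. (h x)\<^sup>2 * u x \<partial>\<mu>) = 0"
      using integrable_cong_AE int
      by (subst integral_cong_AE[where g="\<lambda>_. 0"]) (auto elim!: eventually_mono)
    then show ?thesis using rhs unfolding s_def by simp
  next
    case False
    then have s: "s > 0" unfolding s_def by (simp add: less_le)
    define k where "k x = (1 / sqrt s) * h x" for x
    have k: "k \<in> D" unfolding k_def[abs_def] by (rule dirichlet_form_scale_mem[OF DF h])
    have k2: "(k x)\<^sup>2 = (h x)\<^sup>2 / s" for x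
      unfolding k_def using s by (simp add: power_mult_distrib power_divide)
    have k_norm: "(\<integral>x. (k x)\<^sup>2 \<partial>\<mu>) = 1" unfolding k2 using s by (simp add: s_def)
    have "E k k = E h h / s"
      unfolding k_def[abs_def] using dirichlet_form_energy_scale[OF DF h, of "1 / sqrt s"] s
      by (simp add: power_divide)
    have "integrable \<mu> (\<lambda>x. (k x)\<^sup>2 * u x)" unfolding k2 using int by simp
    then have "ereal (\<integral>x. (k x)\<^sup>2 * u x \<partial>\<mu>) \<le> orlicz_norm \<mu> \<Phi> (\<lambda>x. (k x)\<^sup>2)"
      by (rule integral_le_orlicz_norm[OF u])
    also have "\<dots> \<le> ereal (C1 * (E h h / s) + C2)"
      using orlicz_ineq[OF k k_norm] unfolding k_norm \<open>E k k = E h h / s\<close> by simp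
    finally have "(\<integral>x. (k x)\<^sup>2 * u x \<partial>\<mu>) \<le> C1 * (E h h / s) + C2" by simp
    moreover have "(\<integral>x. (k x)\<^sup>2 * u x \<partial>\<mu>) = (\<integral>x. (h x)\<^sup>2 * u x \<partial>\<mu>) / s"
      unfolding k2 by simp
    ultimately show ?thesis using s unfolding s_def[symmetric] by (simp add: field_simps)
  qed
qed

lemma nn_integral_bounded_weight_square_le:
  assumes c0: "c0 > 0" and w_dual: "(\<integral>\<^sup>+x. young_conj \<Phi> (\<bar>w x\<bar> / c0) \<partial>\<mu>) \<le> 1"
    and w: "w \<in> borel_measurable \<mu>" "\<And>x. 0 \<le> w x" "\<And>x. w x \<le> B" and h: "h \<in> D"
  shows "(\<integral>\<^sup>+x. ennreal (w x * (h x)\<^sup>2) \<partial>\<mu>)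
    \<le> ennreal (c0 * (C1 * E h h + C2 * (\<integral>x. (h x)\<^sup>2 \<partial>\<mu>)))"
proof -
  have h_meas: "h \<in> borel_measurable \<mu>" and h2: "integrable \<mu> (\<lambda>x. (h x)\<^sup>2)"
    using dirichlet_form_sq_int[OF DF h] unfolding sq_int_def by auto
  have B: "0 \<le> B" using w(2,3) order_trans by blast
  define u where "u x = w x / c0" for x
  have u_meas: "u \<in> borel_measurable \<mu>" unfolding u_def[abs_def] using w(1) by measurable
  have u_gauge: "orlicz_gauge \<mu> (young_conj \<Phi>) u \<le> 1"
    using w_dual c0 w(2) by (intro orlicz_gauge_le_1I) (simp add: u_def)
  have int: "integrable \<mu> (\<lambda>x. (h x)\<^sup>2 * u x)"
  proof (rule Bochner_Integration.integrable_bound)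
    show "integrable \<mu> (\<lambda>x. B / c0 * (h x)\<^sup>2)" using h2 by simp
    show "AE x in \<mu>. norm ((h x)\<^sup>2 * u x) \<le> norm (B / c0 * (h x)\<^sup>2)"
    proof (intro AE_I2)
      fix x
      have "(h x)\<^sup>2 * w x \<le> (h x)\<^sup>2 * B" using w(3) by (intro mult_left_mono) auto
      then show "norm ((h x)\<^sup>2 * u x) \<le> norm (B / c0 * (h x)\<^sup>2)"
        using c0 w(2)[of x] B by (simp add: u_def abs_mult divide_right_mono mult.commute)
    qed
  qed (use h_meas u_meas in measurable)
  have "(\<integral>x. w x * (h x)\<^sup>2 \<partial>\<mu>) = c0 * (\<integral>x. (h x)\<^sup>2 * u x \<partial>\<mu>)"
    using c0 by (simp add: u_def field_simps)
  also have "\<dots> \<le> c0 * (C1 * E h h + C2 * (\<integral>x. (h x)\<^sup>2 \<partial>\<mu>))"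
    using integral_square_mult_le[OF h u_meas u_gauge int] c0 by simp
  moreover have "integrable \<mu> (\<lambda>x. w x * (h x)\<^sup>2)"
    using integrable_mult_right[OF int, of c0] c0 by (simp add: u_def mult.commute)
  ultimately show ?thesis
    using w(2) by (subst nn_integral_eq_integral) (auto intro!: ennreal_leI)
qed

lemma nn_integral_weight_square_le:
  assumes c0: "c0 > 0" and w_dual: "(\<integral>\<^sup>+x. young_conj \<Phi> (\<bar>w x\<bar> / c0) \<partial>\<mu>) \<le> 1"
    and w: "w \<in> borel_measurable \<mu>" "\<And>x. 0 \<le> w x" and h: "h \<in> D"
  shows "(\<integral>\<^sup>+x. ennreal (w x * (h x)\<^sup>2) \<partial>\<mu>)
    \<le> ennreal (c0 * (C1 * E h h + C2 * (\<integral>x. (h x)\<^sup>2 \<partial>\<mu>)))"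
proof -
  have h_meas: "h \<in> borel_measurable \<mu>"
    using dirichlet_form_sq_int[OF DF h] unfolding sq_int_def by auto
  have truncated: "(\<integral>\<^sup>+x. ennreal (min (w x) (real n) * (h x)\<^sup>2) \<partial>\<mu>)
      \<le> ennreal (c0 * (C1 * E h h + C2 * (\<integral>x. (h x)\<^sup>2 \<partial>\<mu>)))" for n
  proof (rule nn_integral_bounded_weight_square_le[OF c0 _ _ _ _ h, where B="real n"])
    have "(\<integral>\<^sup>+x. young_conj \<Phi> (\<bar>min (w x) (real n)\<bar> / c0) \<partial>\<mu>)
        \<le> (\<integral>\<^sup>+x. young_conj \<Phi> (\<bar>w x\<bar> / c0) \<partial>\<mu>)"
      using c0 w(2) by (intro nn_integral_mono young_conj_mono) (auto simp: divide_right_mono)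
    then show "(\<integral>\<^sup>+x. young_conj \<Phi> (\<bar>min (w x) (real n)\<bar> / c0) \<partial>\<mu>) \<le> 1"
      using w_dual by (rule order_trans)
  qed (use w in auto)
  have "(\<integral>\<^sup>+x. ennreal (w x * (h x)\<^sup>2) \<partial>\<mu>)
      = (\<integral>\<^sup>+x. (SUP n. ennreal (min (w x) (real n) * (h x)\<^sup>2)) \<partial>\<mu>)"
  proof (intro nn_integral_cong antisym)
    fix x
    have "min (w x) (real (nat \<lceil>w x\<rceil>)) = w x" by (simp add: real_nat_ceiling_ge)
    then show "ennreal (w x * (h x)\<^sup>2) \<le> (SUP n. ennreal (min (w x) (real n) * (h x)\<^sup>2))"
      by (intro SUP_upper2[where i="nat \<lceil>w x\<rceil>"]) auto
  qed (auto intro!: SUP_least ennreal_leI mult_right_mono)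
  also have "\<dots> = (SUP n. (\<integral>\<^sup>+x. ennreal (min (w x) (real n) * (h x)\<^sup>2) \<partial>\<mu>))"
    by (rule nn_integral_monotone_convergence_SUP)
      (auto simp: incseq_def le_fun_def intro!: ennreal_leI mult_right_mono, use w h_meas in measurable)
  also have "\<dots> \<le> ennreal (c0 * (C1 * E h h + C2 * (\<integral>x. (h x)\<^sup>2 \<partial>\<mu>)))"
    by (rule SUP_least) (rule truncated)
  finally show ?thesis .
qed

end

lemma (in prob_space) integral_sqrt_density_deviation:
  fixes g :: "'a \<Rightarrow> real"
  assumes g: "g \<in> borel_measurable M" "integrable M (\<lambda>x. (g x)\<^sup>2)" "\<And>x. 0 \<le> g x"
    and norm: "(\<integral>x. (g x)\<^sup>2 \<partial>M) = 1"
  shows "(\<integral>x. (g x - 1)\<^sup>2 \<partial>M) \<le> 2 * ((\<integral>x. (g x)\<^sup>2 \<partial>M) - (\<integral>x. g x \<partial>M)\<^sup>2)"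
    and "(\<integral>x. (g x + 1)\<^sup>2 \<partial>M) \<le> 4"
proof -
  define m where "m = (\<integral>x. g x \<partial>M)"
  have g1: "integrable M g" by (rule square_integrable_imp_integrable[OF g(1,2)])
  have shift: "(\<integral>x. (g x + c)\<^sup>2 \<partial>M) = 1 + 2 * c * m + c\<^sup>2" for c
  proof -
    have "(\<lambda>x. (g x + c)\<^sup>2) = (\<lambda>x. (g x)\<^sup>2 + (2 * c * g x + c\<^sup>2))"
      by (simp add: power2_eq_square algebra_simps)
    then show ?thesis using g(2) g1 by (simp add: norm m_def prob_space)
  qed
  have "0 \<le> m" unfolding m_def using g(3) by simp
  moreover have "m\<^sup>2 \<le> 1"
    using variance_eq[OF g1 g(2)] variance_positive[of g] norm unfolding m_def by simp
  then have "m \<le> 1" using power2_le_imp_le[of m 1] by simp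
  ultimately show "(\<integral>x. (g x - 1)\<^sup>2 \<partial>M) \<le> 2 * ((\<integral>x. (g x)\<^sup>2 \<partial>M) - (\<integral>x. g x \<partial>M)\<^sup>2)"
    and "(\<integral>x. (g x + 1)\<^sup>2 \<partial>M) \<le> 4"
    using shift[of "-1"] shift[of 1] unfolding norm m_def[symmetric]
    by (simp_all add: power2_eq_square mult_left_le_one_le)
qed

text \<open>Cauchy--Schwarz applied to the factorisation \<open>g\<^sup>2 - 1 = (g - 1)(g + 1)\<close>.\<close>
lemma nn_integral_abs_square_sub_one_le:
  fixes w g :: "'a \<Rightarrow> real"
  assumes [measurable]: "w \<in> borel_measurable M" "g \<in> borel_measurable M"
    and nonneg: "\<And>x. 0 \<le> w x" "\<And>x. 0 \<le> g x"
  shows "(\<integral>\<^sup>+x. ennreal (w x * \<bar>(g x)\<^sup>2 - 1\<bar>) \<partial>M)\<^sup>2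
    \<le> (\<integral>\<^sup>+x. ennreal (w x * (g x - 1)\<^sup>2) \<partial>M) * (\<integral>\<^sup>+x. ennreal (w x * (g x + 1)\<^sup>2) \<partial>M)"
proof -
  define F where "F x = ennreal (sqrt (w x) * \<bar>g x - 1\<bar>)" for x
  define G where "G x = ennreal (sqrt (w x) * (g x + 1))" for x
  have "F x * G x = ennreal (w x * \<bar>(g x)\<^sup>2 - 1\<bar>)" for x
  proof -
    have "(g x)\<^sup>2 - 1 = (g x - 1) * (g x + 1)" by (simp add: power2_eq_square algebra_simps)
    then have "\<bar>(g x)\<^sup>2 - 1\<bar> = \<bar>g x - 1\<bar> * (g x + 1)"
      using nonneg(2)[of x] by (simp add: abs_mult)
    then show ?thesis
      using nonneg[of x] by (simp add: F_def G_def ennreal_mult[symmetric] mult_ac)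
  qed
  moreover have "F x ^ 2 = ennreal (w x * (g x - 1)\<^sup>2)" "G x ^ 2 = ennreal (w x * (g x + 1)\<^sup>2)" for x
    using nonneg[of x] by (simp_all add: F_def G_def ennreal_power power_mult_distrib)
  moreover have "F \<in> borel_measurable M" "G \<in> borel_measurable M"
    unfolding F_def[abs_def] G_def[abs_def] by measurable
  ultimately show ?thesis using Cauchy_Schwarz_nn_integral[of F M G] by simp
qed

lemma ennreal_le_sqrt_if_square_le:
  fixes x :: ennreal
  assumes le: "x\<^sup>2 \<le> ennreal c" and c: "0 \<le> c"
  shows "x \<le> ennreal (sqrt c)"
proof (cases x)
  case (real t)
  then have "ennreal (t\<^sup>2) \<le> ennreal c" using le by (simp add: ennreal_power)
  then have "t\<^sup>2 \<le> c" using c by (simp add: ennreal_le_iff)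
  then show ?thesis using real by (simp add: real_le_rsqrt ennreal_leI)
qed (use le in \<open>simp add: top_unique\<close>)

lemma dist_powr_le_moments:
  fixes x y z :: "'a::metric_space"
  assumes q: "0 \<le> q" "q \<le> p"
  shows "dist x y powr q \<le> 2 powr p * (1 + dist x z powr p) + 2 powr p * (1 + dist y z powr p)"
proof -
  define m where "m = max (dist x z) (dist y z)"
  have "dist x y \<le> dist x z + dist y z" by (rule dist_triangle2)
  also have "\<dots> \<le> 2 * m" unfolding m_def by simp
  finally have "dist x y powr q \<le> (2 * m) powr q" using q by (intro powr_mono2) auto
  also have "\<dots> = 2 powr q * m powr q" unfolding m_def by (simp add: powr_mult)
  also have "\<dots> \<le> 2 powr p * (1 + m powr p)"
  proof (intro mult_mono)
    show "m powr q \<le> 1 + m powr p"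
    proof (cases "m \<le> 1")
      case True
      then have "m powr q \<le> 1" using q unfolding m_def by (intro powr_le1) (auto simp: le_max_iff_disj)
      then show ?thesis using powr_ge_zero[of m p] by linarith
    next
      case False
      then have "m powr q \<le> m powr p" using q by (intro powr_mono) auto
      then show ?thesis by linarith
    qed
  qed (use q in auto)
  also have "\<dots> \<le> 2 powr p * (1 + dist x z powr p) + 2 powr p * (1 + dist y z powr p)"
    unfolding m_def by (auto simp: max_def algebra_simps)
  finally show ?thesis .
qed

lemma powr_le_tangent:
  fixes t r l :: real
  assumes t: "0 \<le> t" and r: "0 < r" "r \<le> 1" and l: "0 < l"
  shows "t powr r \<le> r * l powr (r - 1) * t + (1 - r) * l powr r"
proof (cases "t = 0")
  case True then show ?thesis using r l by simp
next
  case False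
  then have "(t / l) powr r * 1 powr (1 - r) \<le> r * (t / l) + (1 - r) * 1"
    using t r l by (intro Youngs_inequality_0) auto
  then have "t powr r \<le> (r * (t / l) + (1 - r)) * l powr r"
    using t l by (simp add: powr_divide divide_le_eq)
  also have "\<dots> = r * (l powr r / l) * t + (1 - r) * l powr r" by (simp add: field_simps)
  finally show ?thesis using l by (simp add: powr_diff)
qed

text \<open>A Lyapunov-type bound avoiding integrability issues: integrate the tangent of the
  concave map \<open>t \<mapsto> t powr (q/p)\<close> at \<open>1 + m\<close>.\<close>
lemma (in prob_space) nn_integral_powr_le_moment:
  fixes X :: "'a \<Rightarrow> real"
  assumes X: "X \<in> borel_measurable M" "\<And>x. 0 \<le> X x" and q: "0 < q" "q \<le> p"
    and moment: "(\<integral>\<^sup>+x. ennreal (X x powr p) \<partial>M) \<le> ennreal m" and m: "0 \<le> m"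
  shows "(\<integral>\<^sup>+x. ennreal (X x powr q) \<partial>M) \<le> ennreal ((1 + m) powr (q / p))"
proof -
  define r where "r = q / p"
  define \<alpha> where "\<alpha> = r * (1 + m) powr (r - 1)"
  define \<beta> where "\<beta> = (1 - r) * (1 + m) powr r"
  have r: "0 < r" "r \<le> 1" unfolding r_def using q by auto
  have \<alpha>\<beta>: "0 \<le> \<alpha>" "0 \<le> \<beta>" unfolding \<alpha>_def \<beta>_def using r by auto
  have "X x powr q \<le> \<alpha> * X x powr p + \<beta>" for x
    using powr_le_tangent[of "X x powr p" r "1 + m"] r m q X(2)[of x]
    unfolding \<alpha>_def \<beta>_def r_def by (simp add: powr_powr mult_ac)
  then have "(\<integral>\<^sup>+x. ennreal (X x powr q) \<partial>M) \<le> (\<integral>\<^sup>+x. ennreal \<alpha> * ennreal (X x powr p) + ennreal \<beta> \<partial>M)"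
    using \<alpha>\<beta> by (intro nn_integral_mono) (metis ennreal_leI ennreal_mult' ennreal_plus powr_ge_zero
        mult_nonneg_nonneg)
  also have "\<dots> = ennreal \<alpha> * (\<integral>\<^sup>+x. ennreal (X x powr p) \<partial>M) + ennreal \<beta>"
    using X(1) by (simp add: nn_integral_add nn_integral_cmult emeasure_space_1)
  also have "\<dots> \<le> ennreal (\<alpha> * m + \<beta>)"
    using \<alpha>\<beta> m moment by (simp add: ennreal_mult ennreal_plus mult_left_mono)
  also have "\<alpha> * m + \<beta> \<le> (1 + m) powr r"
  proof -
    have "\<alpha> * m \<le> \<alpha> * (1 + m)" using \<alpha>\<beta> by (intro mult_left_mono) auto
    also have "\<dots> = r * (1 + m) powr r" unfolding \<alpha>_def using m by (simp add: powr_diff)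
    finally show ?thesis unfolding \<beta>_def by (simp add: algebra_simps)
  qed
  finally show ?thesis unfolding r_def by (simp add: ennreal_leI order_trans)
qed

lemma powr_one_plus_sub_one_le:
  fixes e y Y :: real
  assumes e: "0 < e" and y: "0 \<le> y" "y \<le> Y"
  shows "(1 + y) powr e - 1 \<le> e * (1 + Y) powr e * y"
proof (cases "y = 0")
  case False
  have "\<exists>z. 1 < z \<and> z < 1 + y \<and> (1 + y) powr e - 1 powr e = (1 + y - 1) * (e * z powr (e - 1))"
    by (rule MVT2) (use y False in \<open>auto intro!: has_real_derivative_powr\<close>)
  then obtain z where z: "1 < z" "z < 1 + y" and eq: "(1 + y) powr e - 1 = y * (e * z powr (e - 1))"
    by auto
  have "z powr (e - 1) \<le> z powr e" using z by (intro powr_mono) auto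
  also have "\<dots> \<le> (1 + Y) powr e" using z y e by (intro powr_mono2) auto
  finally show ?thesis using eq y e by (simp add: mult_left_mono mult_ac)
qed simp

definition growth_const :: "real \<Rightarrow> real \<Rightarrow> real" where
  "growth_const e K = max (2 * K\<^sup>2 * e * (1 + 2 * K\<^sup>2) powr e) (2 powr e * (1 + 2 * K))"

lemma growth_const_pos: "0 \<le> K \<Longrightarrow> 0 < growth_const e K"
  unfolding growth_const_def by (simp add: less_max_iff_disj add_pos_nonneg)

text \<open>For \<open>I \<le> 1\<close> the first bound on \<open>y\<close> is used, for \<open>I \<ge> 1\<close> the second; each case
  produces one of the two terms of \<open>growth_const\<close>.\<close>
lemma powr_one_plus_square_sub_one_le:
  fixes e K I y :: real
  assumes e: "0 < e" and K: "0 \<le> K" and I: "0 \<le> I" and y: "0 \<le> y"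
    and y_le: "y \<le> K * sqrt (I * (1 + I))"
    and y_moment: "y \<le> (1 + K * sqrt (I * (1 + I))) powr (1 / (2 * e))"
  shows "(1 + y\<^sup>2) powr e - 1 \<le> growth_const e K * I"
proof (cases "I \<le> 1")
  case True
  have "y\<^sup>2 \<le> (K * sqrt (I * (1 + I)))\<^sup>2" using y y_le by (intro power_mono) auto
  also have "\<dots> = K\<^sup>2 * (I * (1 + I))" using I by (simp add: power_mult_distrib)
  also have "\<dots> \<le> K\<^sup>2 * (I * 2)" using True I by (intro mult_left_mono) auto
  finally have y2: "y\<^sup>2 \<le> 2 * K\<^sup>2 * I" by (simp add: mult_ac)
  then have "y\<^sup>2 \<le> 2 * K\<^sup>2" using True by (smt (verit) mult_left_le zero_le_power2)
  then have "(1 + y\<^sup>2) powr e - 1 \<le> e * (1 + 2 * K\<^sup>2) powr e * y\<^sup>2"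
    by (intro powr_one_plus_sub_one_le e) auto
  also have "\<dots> \<le> e * (1 + 2 * K\<^sup>2) powr e * (2 * K\<^sup>2 * I)"
    using y2 e by (intro mult_left_mono) auto
  also have "\<dots> = (2 * K\<^sup>2 * e * (1 + 2 * K\<^sup>2) powr e) * I" by (simp add: mult_ac)
  also have "\<dots> \<le> growth_const e K * I"
    unfolding growth_const_def using I by (intro mult_right_mono) auto
  finally show ?thesis .
next
  case False
  define Y where "Y = 1 + K * sqrt (I * (1 + I))"
  have Y1: "1 \<le> Y" unfolding Y_def using K I by simp
  have "sqrt (I * (1 + I)) \<le> sqrt ((2 * I)\<^sup>2)"
    using False by (intro real_sqrt_le_mono) (simp add: power2_eq_square algebra_simps)
  also have "\<dots> = 2 * I" using I by (simp only: real_sqrt_abs abs_of_nonneg mult_nonneg_nonneg)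
  finally have "K * sqrt (I * (1 + I)) \<le> K * (2 * I)" using K by (intro mult_left_mono)
  then have "Y \<le> (1 + 2 * K) * I" unfolding Y_def using False by (simp add: algebra_simps)
  have "y\<^sup>2 \<le> (Y powr (1 / (2 * e)))\<^sup>2" using y y_moment unfolding Y_def by (intro power_mono) auto
  also have "\<dots> = Y powr (1 / e)"
    using Y1 by (subst powr_realpow[symmetric]) (simp_all add: powr_powr)
  finally have "1 + y\<^sup>2 \<le> 2 * Y powr (1 / e)" using Y1 ge_one_powr_ge_zero[of Y "1 / e"] e by simp
  then have "(1 + y\<^sup>2) powr e \<le> (2 * Y powr (1 / e)) powr e" using e by (intro powr_mono2) auto
  also have "\<dots> = 2 powr e * Y" using Y1 e by (simp add: powr_mult powr_powr)
  also have "\<dots> \<le> 2 powr e * ((1 + 2 * K) * I)"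
    using \<open>Y \<le> (1 + 2 * K) * I\<close> by (intro mult_left_mono) auto
  also have "\<dots> = (2 powr e * (1 + 2 * K)) * I" by (simp add: mult_ac)
  also have "\<dots> \<le> growth_const e K * I"
    unfolding growth_const_def using I by (intro mult_right_mono) auto
  finally show ?thesis by simp
qed

lemma fisher_info_finiteE:
  assumes "fisher_info D E \<mu> \<nu> \<noteq> \<infinity>"
  obtains f where "f \<in> borel_measurable \<mu>" "\<And>x. 0 \<le> f x" "\<nu> = density \<mu> (\<lambda>x. ennreal (f x))"
    "(\<lambda>x. sqrt (f x)) \<in> D" "fisher_info D E \<mu> \<nu> = ennreal (E (\<lambda>x. sqrt (f x)) (\<lambda>x. sqrt (f x)))"
proof -
  let ?P = "\<lambda>f. f \<in> borel_measurable \<mu> \<and> (\<forall>x. f x \<ge> 0) \<and> \<nu> = density \<mu> (\<lambda>x. ennreal (f x))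
             \<and> (\<lambda>x. sqrt (f x)) \<in> D"
  have ex: "\<exists>f. ?P f" using assms unfolding fisher_info_def by (auto split: if_splits)
  then have "?P (SOME f. ?P f)" by (rule someI_ex)
  moreover have "fisher_info D E \<mu> \<nu>
      = ennreal (E (\<lambda>x. sqrt ((SOME f. ?P f) x)) (\<lambda>x. sqrt ((SOME f. ?P f) x)))"
    using ex unfolding fisher_info_def by (simp add: Let_def)
  ultimately show ?thesis by (intro that[of "SOME f. ?P f"]) auto
qed

text \<open>The moment hypothesis \<open>d(\<cdot>, x0) powr p \<in> L\<^sup>\<Psi>(\<mu>)\<close> enters through a Luxemburg witness \<open>c0\<close>.\<close>
locale orlicz_poincare_form = prob_space \<mu>
  for \<mu> :: "'a::{metric_space, second_countable_topology} measure" +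
  fixes D :: "('a \<Rightarrow> real) set" and E :: "('a \<Rightarrow> real) \<Rightarrow> ('a \<Rightarrow> real) \<Rightarrow> real"
    and \<Phi> :: "real \<Rightarrow> ennreal" and C1 C2 C_P p c0 :: real and x0 :: 'a
  assumes sets_\<mu>: "sets \<mu> = sets borel"
    and DF: "dirichlet_form \<mu> D E" and cons: "conservative_form \<mu> D E"
    and C12: "C1 \<ge> 0" "C2 \<ge> 0"
    and orlicz_ineq: "\<And>g. g \<in> D \<Longrightarrow> (\<integral>x. (g x)\<^sup>2 \<partial>\<mu>) = 1 \<Longrightarrow>
           orlicz_norm \<mu> \<Phi> (\<lambda>x. (g x)\<^sup>2) \<le> ereal (C1 * E g g + C2 * (\<integral>x. (g x)\<^sup>2 \<partial>\<mu>))"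
    and poincare: "\<And>g. g \<in> D \<Longrightarrow> (\<integral>x. (g x)\<^sup>2 \<partial>\<mu>) - (\<integral>x. g x \<partial>\<mu>)\<^sup>2 \<le> C_P * E g g"
    and p: "p \<ge> 1"
    and c0: "c0 > 0" and moment: "(\<integral>\<^sup>+x. young_conj \<Phi> (\<bar>dist x x0 powr p\<bar> / c0) \<partial>\<mu>) \<le> 1"
begin

definition deviation_const :: real where
  "deviation_const = (1 + c0 * C2) * (2 * max C_P 0) + c0 * C1"

definition mass_const :: real where
  "mass_const = 4 * (1 + c0 * C2) + c0 * C1"

definition moment_const :: real where
  "moment_const = sqrt (deviation_const * mass_const)"

definition transport_const :: real where
  "transport_const = 2 powr p * (moment_const + 1)"

lemma deviation_mass_const_nonneg: "0 \<le> deviation_const" "0 \<le> mass_const"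
  unfolding deviation_const_def mass_const_def using c0 C12 by simp_all

lemma moment_const_nonneg: "0 \<le> moment_const"
  unfolding moment_const_def using deviation_mass_const_nonneg by simp

lemma transport_const_pos: "0 < transport_const"
  unfolding transport_const_def using moment_const_nonneg by simp

lemma measurable_\<mu>: "measurable \<mu> N = measurable borel N"
  by (rule measurable_cong_sets[OF sets_\<mu> refl])

lemma weight_measurable[measurable]: "(\<lambda>x. dist x x0 powr p) \<in> borel_measurable \<mu>"
  unfolding measurable_\<mu> by measurable

lemma nn_integral_one_plus_weight_square_le:
  assumes h: "h \<in> D"
  shows "(\<integral>\<^sup>+x. ennreal ((1 + dist x x0 powr p) * (h x)\<^sup>2) \<partial>\<mu>)
    \<le> ennreal ((1 + c0 * C2) * (\<integral>x. (h x)\<^sup>2 \<partial>\<mu>) + c0 * C1 * E h h)"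
proof -
  have h_meas: "h \<in> borel_measurable \<mu>" and h2: "integrable \<mu> (\<lambda>x. (h x)\<^sup>2)"
    using dirichlet_form_sq_int[OF DF h] unfolding sq_int_def by auto
  have "(\<integral>\<^sup>+x. ennreal ((1 + dist x x0 powr p) * (h x)\<^sup>2) \<partial>\<mu>)
      = (\<integral>\<^sup>+x. ennreal ((h x)\<^sup>2) \<partial>\<mu>) + (\<integral>\<^sup>+x. ennreal (dist x x0 powr p * (h x)\<^sup>2) \<partial>\<mu>)"
    using h_meas by (subst nn_integral_add[symmetric]) (auto simp: ennreal_plus[symmetric] algebra_simps
        simp del: ennreal_plus)
  also have "\<dots> \<le> ennreal (\<integral>x. (h x)\<^sup>2 \<partial>\<mu>)
      + ennreal (c0 * (C1 * E h h + C2 * (\<integral>x. (h x)\<^sup>2 \<partial>\<mu>)))"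
    using h2 nn_integral_weight_square_le[OF DF C12 orlicz_ineq c0 moment
        weight_measurable _ h]
    by (simp add: nn_integral_eq_integral)
  also have "\<dots> = ennreal ((1 + c0 * C2) * (\<integral>x. (h x)\<^sup>2 \<partial>\<mu>) + c0 * C1 * E h h)"
    using c0 C12 dirichlet_form_energy_nonneg[OF DF h]
    by (subst ennreal_plus[symmetric]) (auto simp: algebra_simps)
  finally show ?thesis .
qed

context
  fixes g :: "'a \<Rightarrow> real"
  assumes g: "g \<in> D" "\<And>x. 0 \<le> g x" and norm: "(\<integral>x. (g x)\<^sup>2 \<partial>\<mu>) = 1"
begin

lemma nn_integral_weighted_sub_one_square_le:
  "(\<integral>\<^sup>+x. ennreal ((1 + dist x x0 powr p) * (g x - 1)\<^sup>2) \<partial>\<mu>) \<le> ennreal (deviation_const * E g g)"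
proof -
  have shift: "(\<lambda>x. g x - 1) \<in> D" "E (\<lambda>x. g x - 1) (\<lambda>x. g x - 1) = E g g"
    using dirichlet_form_energy_add_const[OF DF cons g(1), of "-1"] by simp_all
  have "(\<integral>x. (g x - 1)\<^sup>2 \<partial>\<mu>) \<le> 2 * (C_P * E g g)"
    using integral_sqrt_density_deviation(1)[OF _ _ g(2) norm] dirichlet_form_sq_int[OF DF g(1)]
      poincare[OF g(1)] norm by (simp add: sq_int_def)
  also have "\<dots> \<le> 2 * max C_P 0 * E g g"
    using dirichlet_form_energy_nonneg[OF DF g(1)] by (simp add: mult_right_mono)
  finally have "(1 + c0 * C2) * (\<integral>x. (g x - 1)\<^sup>2 \<partial>\<mu>) \<le> (1 + c0 * C2) * (2 * max C_P 0 * E g g)"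
    using c0 C12 by (intro mult_left_mono) auto
  then have "(1 + c0 * C2) * (\<integral>x. (g x - 1)\<^sup>2 \<partial>\<mu>) + c0 * C1 * E g g \<le> deviation_const * E g g"
    unfolding deviation_const_def by (simp add: algebra_simps)
  then show ?thesis
    using nn_integral_one_plus_weight_square_le[OF shift(1)] unfolding shift(2)
    by (meson ennreal_leI order_trans)
qed

lemma nn_integral_weighted_add_one_square_le:
  "(\<integral>\<^sup>+x. ennreal ((1 + dist x x0 powr p) * (g x + 1)\<^sup>2) \<partial>\<mu>) \<le> ennreal (mass_const * (1 + E g g))"
proof -
  have shift: "(\<lambda>x. g x + 1) \<in> D" "E (\<lambda>x. g x + 1) (\<lambda>x. g x + 1) = E g g"
    using dirichlet_form_energy_add_const[OF DF cons g(1)] by auto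
  have "(1 + c0 * C2) * (\<integral>x. (g x + 1)\<^sup>2 \<partial>\<mu>) \<le> (1 + c0 * C2) * 4"
    using integral_sqrt_density_deviation(2)[OF _ _ g(2) norm] dirichlet_form_sq_int[OF DF g(1)] c0 C12
    by (intro mult_left_mono) (auto simp: sq_int_def)
  moreover have "(1 + c0 * C2) * 4 + c0 * C1 * E g g \<le> mass_const * (1 + E g g)"
    using c0 C12 dirichlet_form_energy_nonneg[OF DF g(1)] unfolding mass_const_def
    by (simp add: algebra_simps)
  ultimately have "(1 + c0 * C2) * (\<integral>x. (g x + 1)\<^sup>2 \<partial>\<mu>) + c0 * C1 * E g g \<le> mass_const * (1 + E g g)"
    by linarith
  then show ?thesis
    using nn_integral_one_plus_weight_square_le[OF shift(1)] unfolding shift(2)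
    by (meson ennreal_leI order_trans)
qed

end

lemma nn_integral_weighted_density_deviation_le:
  assumes f: "f \<in> borel_measurable \<mu>" "\<And>x. 0 \<le> f x" "(\<integral>\<^sup>+x. ennreal (f x) \<partial>\<mu>) = 1"
    and sqrt_f: "(\<lambda>x. sqrt (f x)) \<in> D"
  defines "I \<equiv> E (\<lambda>x. sqrt (f x)) (\<lambda>x. sqrt (f x))"
  shows "(\<integral>\<^sup>+x. ennreal ((1 + dist x x0 powr p) * \<bar>f x - 1\<bar>) \<partial>\<mu>)
    \<le> ennreal (moment_const * sqrt (I * (1 + I)))"
proof -
  define g where "g = (\<lambda>x. sqrt (f x))"
  have g: "g \<in> D" "\<And>x. 0 \<le> g x" "\<And>x. (g x)\<^sup>2 = f x" and I_g: "I = E g g"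
    using sqrt_f f(2) unfolding g_def I_def by auto
  have I: "0 \<le> I" unfolding I_g by (rule dirichlet_form_energy_nonneg[OF DF g(1)])
  have g_meas: "g \<in> borel_measurable \<mu>" and g2: "integrable \<mu> (\<lambda>x. (g x)\<^sup>2)"
    using dirichlet_form_sq_int[OF DF g(1)] unfolding sq_int_def by auto
  have "ennreal (\<integral>x. (g x)\<^sup>2 \<partial>\<mu>) = (\<integral>\<^sup>+x. ennreal ((g x)\<^sup>2) \<partial>\<mu>)"
    by (rule nn_integral_eq_integral[OF g2, symmetric]) simp
  also have "\<dots> = 1" using f(3) by (simp add: g(3))
  finally have norm: "(\<integral>x. (g x)\<^sup>2 \<partial>\<mu>) = 1" by simp
  have "(\<integral>\<^sup>+x. ennreal ((1 + dist x x0 powr p) * \<bar>f x - 1\<bar>) \<partial>\<mu>)\<^sup>2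
      \<le> (\<integral>\<^sup>+x. ennreal ((1 + dist x x0 powr p) * (g x - 1)\<^sup>2) \<partial>\<mu>)
        * (\<integral>\<^sup>+x. ennreal ((1 + dist x x0 powr p) * (g x + 1)\<^sup>2) \<partial>\<mu>)"
    using nn_integral_abs_square_sub_one_le[of "\<lambda>x. 1 + dist x x0 powr p" \<mu> g] g_meas g(2)
    by (simp add: g(3))
  also have "\<dots> \<le> ennreal (deviation_const * I) * ennreal (mass_const * (1 + I))"
    unfolding I_g using nn_integral_weighted_sub_one_square_le[OF g(1,2) norm]
      nn_integral_weighted_add_one_square_le[OF g(1,2) norm] by (rule mult_mono) auto
  also have "\<dots> = ennreal ((deviation_const * mass_const) * (I * (1 + I)))"
    using deviation_mass_const_nonneg I by (simp add: ennreal_mult[symmetric] mult_ac)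
  finally have "(\<integral>\<^sup>+x. ennreal ((1 + dist x x0 powr p) * \<bar>f x - 1\<bar>) \<partial>\<mu>)
      \<le> ennreal (sqrt ((deviation_const * mass_const) * (I * (1 + I))))"
    using deviation_mass_const_nonneg I by (intro ennreal_le_sqrt_if_square_le) auto
  then show ?thesis unfolding moment_const_def by (simp add: real_sqrt_mult)
qed

lemma nn_integral_density_eq_1:
  assumes "\<nu> \<in> prob_measures" "\<nu> = density \<mu> (\<lambda>x. ennreal (f x))" "f \<in> borel_measurable \<mu>"
  shows "(\<integral>\<^sup>+x. ennreal (f x) \<partial>\<mu>) = 1"
proof -
  have "emeasure \<nu> (space \<mu>) = 1"
    using assms(1,2) prob_space.emeasure_space_1 unfolding prob_measures_def by fastforce
  then show ?thesis using assms(2,3) by (simp add: emeasure_density)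
qed

lemma finite_fisher_info_coupling:
  assumes \<nu>: "\<nu> \<in> prob_measures" and fin: "fisher_info D E \<mu> \<nu> \<noteq> \<infinity>"
  defines "I \<equiv> enn2real (fisher_info D E \<mu> \<nu>)"
  obtains \<pi> where "\<pi> \<in> couplings \<nu> \<mu>" "prob_space \<pi>"
    "\<And>q. 0 \<le> q \<Longrightarrow> q \<le> p \<Longrightarrow>
       (\<integral>\<^sup>+z. ennreal (dist (fst z) (snd z) powr q) \<partial>\<pi>) \<le> ennreal (transport_const * sqrt (I * (1 + I)))"
proof -
  obtain f where f: "f \<in> borel_measurable \<mu>" "\<And>x. 0 \<le> f x" "\<nu> = density \<mu> (\<lambda>x. ennreal (f x))"
      and sqrt_f: "(\<lambda>x. sqrt (f x)) \<in> D"
      and fisher: "fisher_info D E \<mu> \<nu> = ennreal (E (\<lambda>x. sqrt (f x)) (\<lambda>x. sqrt (f x)))"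
    using fisher_info_finiteE[OF fin] by blast
  have I: "I = E (\<lambda>x. sqrt (f x)) (\<lambda>x. sqrt (f x))" "0 \<le> I"
    unfolding I_def fisher using dirichlet_form_energy_nonneg[OF DF sqrt_f] by auto
  have f1: "(\<integral>\<^sup>+x. ennreal (f x) \<partial>\<mu>) = 1" by (rule nn_integral_density_eq_1[OF \<nu> f(3,1)])
  interpret density_coupling \<mu> f by unfold_locales (use sets_\<mu> f f1 in auto)
  have "(\<integral>\<^sup>+z. ennreal (dist (fst z) (snd z) powr q) \<partial>coupling)
      \<le> ennreal (transport_const * sqrt (I * (1 + I)))" if q: "0 \<le> q" "q \<le> p" for q
  proof -
    have "(\<integral>\<^sup>+z. ennreal (dist (fst z) (snd z) powr q) \<partial>coupling)
        \<le> (\<integral>\<^sup>+x. ennreal (2 powr p * (1 + dist x x0 powr p)) * ennreal \<bar>f x - 1\<bar> \<partial>\<mu>)"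
      using dist_powr_le_moments[OF q] by (intro nn_integral_coupling_le) (auto simp: ennreal_plus[symmetric]
          simp del: ennreal_plus intro!: ennreal_leI)
    also have "\<dots> = ennreal (2 powr p) * (\<integral>\<^sup>+x. ennreal ((1 + dist x x0 powr p) * \<bar>f x - 1\<bar>) \<partial>\<mu>)"
      using f(1) by (subst nn_integral_cmult[symmetric]) (auto simp: ennreal_mult[symmetric] mult.assoc)
    also have "\<dots> \<le> ennreal (2 powr p) * ennreal (moment_const * sqrt (I * (1 + I)))"
      unfolding I(1) by (intro mult_left_mono nn_integral_weighted_density_deviation_le f f1 sqrt_f) auto
    also have "\<dots> \<le> ennreal (transport_const * sqrt (I * (1 + I)))"
      using moment_const_nonneg I(2)
      by (auto simp: transport_const_def ennreal_mult[symmetric] intro!: ennreal_leI mult_left_mono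
          mult_right_mono)
    finally show ?thesis .
  qed
  then show ?thesis using that coupling_in_couplings prob_space_coupling f(3) by auto
qed

lemma wasserstein_pow_le:
  assumes \<nu>: "\<nu> \<in> prob_measures" and fin: "fisher_info D E \<mu> \<nu> \<noteq> \<infinity>" and q: "0 < q" "q \<le> p"
  defines "I \<equiv> enn2real (fisher_info D E \<mu> \<nu>)"
  shows "wasserstein_pow q \<nu> \<mu> \<le> ennreal (transport_const * sqrt (I * (1 + I)))"
    and "wasserstein_pow q \<nu> \<mu> \<le> ennreal ((1 + transport_const * sqrt (I * (1 + I))) powr (q / p))"
proof -
  obtain \<pi> where \<pi>: "\<pi> \<in> couplings \<nu> \<mu>" "prob_space \<pi>"
    and cost: "\<And>q. 0 \<le> q \<Longrightarrow> q \<le> p \<Longrightarrow>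
       (\<integral>\<^sup>+z. ennreal (dist (fst z) (snd z) powr q) \<partial>\<pi>) \<le> ennreal (transport_const * sqrt (I * (1 + I)))"
    using finite_fisher_info_coupling[OF \<nu> fin] unfolding I_def by blast
  have W: "wasserstein_pow q \<nu> \<mu> \<le> (\<integral>\<^sup>+z. ennreal (dist (fst z) (snd z) powr q) \<partial>\<pi>)"
    unfolding wasserstein_pow_def by (rule INF_lower[OF \<pi>(1)])
  then show "wasserstein_pow q \<nu> \<mu> \<le> ennreal (transport_const * sqrt (I * (1 + I)))"
    using cost[of q] q by auto
  have "(\<lambda>z. dist (fst z) (snd z)) \<in> borel_measurable \<pi>"
    using \<pi>(1) unfolding couplings_def by (simp add: measurable_cong_sets[of \<pi> borel])
  then have "(\<integral>\<^sup>+z. ennreal (dist (fst z) (snd z) powr q) \<partial>\<pi>)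
      \<le> ennreal ((1 + transport_const * sqrt (I * (1 + I))) powr (q / p))"
    using transport_const_pos cost[of p] p q
    by (intro prob_space.nn_integral_powr_le_moment[OF \<pi>(2)]) (auto simp: I_def)
  with W show "wasserstein_pow q \<nu> \<mu> \<le> ennreal ((1 + transport_const * sqrt (I * (1 + I))) powr (q / p))"
    by (rule order_trans)
qed

lemma wasserstein_pow_growth_le:
  assumes \<nu>: "\<nu> \<in> prob_measures" and fin: "fisher_info D E \<mu> \<nu> \<noteq> \<infinity>" and q: "0 < q" "q \<le> p"
  shows "wasserstein_pow q \<nu> \<mu> \<noteq> \<infinity>"
    and "(1 + (enn2real (wasserstein_pow q \<nu> \<mu>))\<^sup>2) powr (p / (2 * q)) - 1
      \<le> growth_const (p / (2 * q)) transport_const * enn2real (fisher_info D E \<mu> \<nu>)"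
proof -
  note W = wasserstein_pow_le[OF \<nu> fin q]
  show "wasserstein_pow q \<nu> \<mu> \<noteq> \<infinity>" using W(1) by (auto simp: top_unique)
  show "(1 + (enn2real (wasserstein_pow q \<nu> \<mu>))\<^sup>2) powr (p / (2 * q)) - 1
      \<le> growth_const (p / (2 * q)) transport_const * enn2real (fisher_info D E \<mu> \<nu>)"
  proof (rule powr_one_plus_square_sub_one_le)
    show "enn2real (wasserstein_pow q \<nu> \<mu>) \<le> (1 + transport_const * sqrt
        (enn2real (fisher_info D E \<mu> \<nu>) * (1 + enn2real (fisher_info D E \<mu> \<nu>)))) powr (1 / (2 * (p / (2 * q))))"
      using W(2) q by (simp add: enn2real_leI)
  qed (use W(1) q p transport_const_pos in \<open>auto simp: enn2real_leI\<close>)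
qed

definition decay_const :: real where
  "decay_const = min (1 / growth_const (p / 2) transport_const) (1 / growth_const (p / 4) transport_const)"

lemma decay_const_pos: "0 < decay_const"
  unfolding decay_const_def using growth_const_pos transport_const_pos by simp

lemma decay_const_mult_le:
  assumes \<nu>: "\<nu> \<in> prob_measures" and fin: "fisher_info D E \<mu> \<nu> \<noteq> \<infinity>"
    and q: "q = 1 \<or> q = 2" "q \<le> p"
  shows "decay_const * ((1 + (enn2real (wasserstein_pow q \<nu> \<mu>))\<^sup>2) powr (p / (2 * q)) - 1)
    \<le> enn2real (fisher_info D E \<mu> \<nu>)"
proof -
  let ?G = "growth_const (p / (2 * q)) transport_const"
  let ?X = "(1 + (enn2real (wasserstein_pow q \<nu> \<mu>))\<^sup>2) powr (p / (2 * q)) - 1"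
  have G: "0 < ?G" using transport_const_pos by (intro growth_const_pos) simp
  have "0 \<le> ?X"
    using q p ge_one_powr_ge_zero[of "1 + (enn2real (wasserstein_pow q \<nu> \<mu>))\<^sup>2" "p / (2 * q)"]
    by auto
  moreover have "decay_const \<le> 1 / ?G" using q(1) by (auto simp: decay_const_def)
  ultimately have "decay_const * ?X \<le> 1 / ?G * ?X" by (rule mult_right_mono[rotated])
  also have "\<dots> \<le> 1 / ?G * (?G * enn2real (fisher_info D E \<mu> \<nu>))"
    using G wasserstein_pow_growth_le(2)[OF \<nu> fin _ q(2)] q(1) by (intro mult_left_mono) auto
  finally show ?thesis using G by simp
qed

lemma wasserstein_pow_p_le_sqrt:
  assumes \<nu>: "\<nu> \<in> prob_measures" and fin: "fisher_info D E \<mu> \<nu> \<noteq> \<infinity>"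
  defines "I \<equiv> enn2real (fisher_info D E \<mu> \<nu>)"
  shows "wasserstein_pow p \<nu> \<mu> \<le> ennreal (sqrt (transport_const\<^sup>2 * I\<^sup>2 + transport_const\<^sup>2 * I))"
proof -
  have "transport_const\<^sup>2 * I\<^sup>2 + transport_const\<^sup>2 * I = transport_const\<^sup>2 * (I * (1 + I))"
    by (simp add: algebra_simps power2_eq_square)
  then have "sqrt (transport_const\<^sup>2 * I\<^sup>2 + transport_const\<^sup>2 * I) = transport_const * sqrt (I * (1 + I))"
    using transport_const_pos by (simp add: real_sqrt_mult)
  then show ?thesis using wasserstein_pow_le(1)[OF \<nu> fin, of p] p unfolding I_def by simp
qed

end

theorem corollary5p2:
  fixes \<mu> :: "'a::polish_space measure"
    and D :: "('a \<Rightarrow> real) set"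
    and E :: "('a \<Rightarrow> real) \<Rightarrow> ('a \<Rightarrow> real) \<Rightarrow> real"
    and \<Phi> :: "real \<Rightarrow> ennreal"
    and C1 C2 C_P p :: real and x0 :: 'a
  assumes mu: "prob_space \<mu>" "sets \<mu> = sets borel"
    and DF: "dirichlet_form \<mu> D E"
    and erg: "ergodic_form \<mu> D E"
    and cons: "conservative_form \<mu> D E"
    and Phi: "young_fun \<Phi>"
    and C12: "C1 \<ge> 0" "C2 \<ge> 0"
    and orlicz_ineq: "\<And>g. g \<in> D \<Longrightarrow> (\<integral>x. (g x)\<^sup>2 \<partial>\<mu>) = 1 \<Longrightarrow>
           orlicz_norm \<mu> \<Phi> (\<lambda>x. (g x)\<^sup>2) \<le> ereal (C1 * E g g + C2 * (\<integral>x. (g x)\<^sup>2 \<partial>\<mu>))"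
    and poincare: "\<And>g. g \<in> D \<Longrightarrow>
           (\<integral>x. (g x)\<^sup>2 \<partial>\<mu>) - (\<integral>x. g x \<partial>\<mu>)\<^sup>2 \<le> C_P * E g g"
    and p: "p \<ge> 1"
    and moment: "(\<lambda>x. dist x x0 powr p) \<in> orlicz_space \<mu> (young_conj \<Phi>)"
  shows "\<exists>C1' C2' \<kappa>. C1' > 0 \<and> C2' > 0 \<and> \<kappa> > 0 \<and>
     (\<forall>\<nu>\<in>prob_measures. fisher_info D E \<mu> \<nu> \<noteq> \<infinity> \<longrightarrow>
        (let I = enn2real (fisher_info D E \<mu> \<nu>) in
           wasserstein_pow p \<nu> \<mu> \<le> ennreal (sqrt (C1' * I\<^sup>2 + C2' * I))
         \<and> wasserstein_pow 1 \<nu> \<mu> \<noteq> \<infinity>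
         \<and> \<kappa> * ((1 + (enn2real (wasserstein_pow 1 \<nu> \<mu>))\<^sup>2) powr (p / 2) - 1) \<le> I
         \<and> (p \<ge> 2 \<longrightarrow> wasserstein_pow 2 \<nu> \<mu> \<noteq> \<infinity>
              \<and> \<kappa> * ((1 + (enn2real (wasserstein_pow 2 \<nu> \<mu>))\<^sup>2) powr (p / 4) - 1) \<le> I)))"
proof -
  have "orlicz_gauge \<mu> (young_conj \<Phi>) (\<lambda>x. dist x x0 powr p) \<noteq> \<infinity>"
    using moment unfolding orlicz_space_def by simp
  then obtain c0 where c0: "c0 > 0" "(\<integral>\<^sup>+x. young_conj \<Phi> (\<bar>dist x x0 powr p\<bar> / c0) \<partial>\<mu>) \<le> 1"
    by (rule orlicz_gauge_finiteD)
  interpret orlicz_poincare_form \<mu> D E \<Phi> C1 C2 C_P p c0 x0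
    unfolding orlicz_poincare_form_def orlicz_poincare_form_axioms_def
    using mu DF cons C12 orlicz_ineq poincare p c0 by blast
  show ?thesis
    unfolding Let_def
  proof (rule exI[of _ "transport_const\<^sup>2"], rule exI[of _ "transport_const\<^sup>2"],
      rule exI[of _ decay_const], intro conjI ballI impI)
    fix \<nu> assume \<nu>: "\<nu> \<in> prob_measures" and fin: "fisher_info D E \<mu> \<nu> \<noteq> \<infinity>"
    show "wasserstein_pow 1 \<nu> \<mu> \<noteq> \<infinity>" "p \<ge> 2 \<Longrightarrow> wasserstein_pow 2 \<nu> \<mu> \<noteq> \<infinity>"
      using wasserstein_pow_growth_le(1)[OF \<nu> fin] p by simp_all
    show "decay_const * ((1 + (enn2real (wasserstein_pow 1 \<nu> \<mu>))\<^sup>2) powr (p / 2) - 1)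
        \<le> enn2real (fisher_info D E \<mu> \<nu>)"
      using decay_const_mult_le[OF \<nu> fin, of 1] p by simp
    show "p \<ge> 2 \<Longrightarrow> decay_const * ((1 + (enn2real (wasserstein_pow 2 \<nu> \<mu>))\<^sup>2) powr (p / 4) - 1)
        \<le> enn2real (fisher_info D E \<mu> \<nu>)"
      using decay_const_mult_le[OF \<nu> fin, of 2] by simp
  qed (use wasserstein_pow_p_le_sqrt transport_const_pos decay_const_pos in auto)
qed

end
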